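(* For all $d\ge1$, $\alpha>1$, positive weights $\boldsymbol\gamma=\{\gamma_u\}$ with $\gamma_\emptyset=1$, and $M>0$, the index set $\mathcal A_d(M)$ satisfies $$|\mathcal A_d(M)|\le M^q\,C_{1,d,q,\alpha,\boldsymbol\gamma}\qquad\text{for all }q>\tfrac1\alpha,\qquad C_{1,d,q,\alpha,\boldsymbol\gamma}:=\sum_{u\subseteq\{1:d\}}\gamma_u^q[2\zeta(\alpha q)]^{|u|}.$$ Moreover, if $M\ge1$ then $|\mathcal A_d(M)|\ge(\gamma_{\{1\}}M)^{1/\alpha}$.
   Context: $\{1:d\}=\{1,\ldots,d\}$; $\zeta$ is the Riemann zeta function. Weights $\gamma_u>0$ for finite $u\subset\mathbb N$, $\gamma_\emptyset=1$. For $\mathbf h\in\mathbb Z^d$, $\mathrm{supp}(\mathbf h)=\{j:h_j\ne0\}$, $r(\mathbf h)=\gamma_{\mathrm{supp}(\mathbf h)}^{-1}\prod_{j\in\mathrm{supp}(\mathbf h)}|h_j|^\alpha$ (so $r(\mathbf0)=1$), and $\mathcal A_d(M)=\{\mathbf h\in\mathbb Z^d:r(\mathbf h)\le M\}$. *)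

theory Defs
  imports "HOL-Analysis.Analysis"
begin

definition zeta :: "real \<Rightarrow> real" where
  "zeta s = (\<Sum>n. 1 / (real (Suc n)) powr s)"

text \<open>Integer vectors in Z^d, represented as functions nat => int supported in {1..d}.\<close>
definition intvecs :: "nat \<Rightarrow> (nat \<Rightarrow> int) set" where
  "intvecs d = {h. \<forall>j. j \<notin> {1..d} \<longrightarrow> h j = 0}"

definition supp :: "(nat \<Rightarrow> int) \<Rightarrow> nat set" where
  "supp h = {j. h j \<noteq> 0}"

definition rfun :: "(nat set \<Rightarrow> real) \<Rightarrow> real \<Rightarrow> (nat \<Rightarrow> int) \<Rightarrow> real" where
  "rfun \<gamma> \<alpha> h = inverse (\<gamma> (supp h)) * (\<Prod>j\<in>supp h. \<bar>real_of_int (h j)\<bar> powr \<alpha>)"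

definition index_set :: "nat \<Rightarrow> (nat set \<Rightarrow> real) \<Rightarrow> real \<Rightarrow> real \<Rightarrow> (nat \<Rightarrow> int) set" where
  "index_set d \<gamma> \<alpha> M = {h \<in> intvecs d. rfun \<gamma> \<alpha> h \<le> M}"

definition C1 :: "nat \<Rightarrow> real \<Rightarrow> real \<Rightarrow> (nat set \<Rightarrow> real) \<Rightarrow> real" where
  "C1 d q \<alpha> \<gamma> = (\<Sum>u\<in>Pow {1..d}. \<gamma> u powr q * (2 * zeta (\<alpha> * q)) ^ card u)"

end

theory Submission
  imports Defs
begin

text \<open>
  Upper bound by Rankin's trick: for q > 0 every h \<in> A_d(M) has 1 \<le> (M / r(h))^q, so
  |A_d(M)| \<le> M^q \<Sum>_h r(h)^(-q). On vectors of support u, r(h)^(-q) = \<gamma>_u^q \<Prod>_{j\<in>u} |h_j|^(-\<alpha>q),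
  so the part of the sum with support u factorises into |u| copies of
  \<Sum>_{k\<noteq>0} |k|^(-\<alpha>q) \<le> 2 \<zeta>(\<alpha>q), which is finite because \<alpha>q > 1.
  For the lower bound, the vectors k e_1 with 0 \<le> k \<le> (\<gamma>_{1} M)^(1/\<alpha>) all lie in A_d(M).
\<close>

lemma summable_zeta:
  assumes "s > 1"
  shows "summable (\<lambda>n. 1 / real (Suc n) powr s)"
proof -
  have "summable (\<lambda>n. real n powr (-s))"
    using assms summable_real_powr_iff by simp
  then show ?thesis
    by (subst (asm) summable_Suc_iff[symmetric]) (simp add: powr_minus_divide)
qed

lemma sum_int_powr_neg_le_zeta:
  assumes "s > 1"
  shows "(\<Sum>k\<in>{1..N::int}. \<bar>real_of_int k\<bar> powr (-s)) \<le> zeta s"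
proof -
  have "{1..N} = int ` {1..nat N}"
    by (cases "N \<ge> 0") (auto simp: image_int_atLeastAtMost)
  then have "(\<Sum>k\<in>{1..N}. \<bar>real_of_int k\<bar> powr (-s)) = (\<Sum>n<nat N. 1 / real (Suc n) powr s)"
    by (simp add: sum.reindex powr_minus_divide sum.atLeast1_atMost_eq)
  also have "\<dots> \<le> zeta s"
    unfolding zeta_def by (rule sum_le_suminf[OF summable_zeta[OF assms]]) auto
  finally show ?thesis .
qed

lemma sum_nonzero_int_powr_neg_le_two_zeta:
  assumes "s > 1"
  shows "(\<Sum>k\<in>{-N..N::int} - {0}. \<bar>real_of_int k\<bar> powr (-s)) \<le> 2 * zeta s"
proof -
  let ?f = "\<lambda>k. \<bar>real_of_int k\<bar> powr (-s)"
  have pos_neg: "{-N..N} - {0} = {1..N} \<union> uminus ` {1..N}"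
    by (auto simp: image_iff intro!: bexI[of _ "- _"])
  have neg: "(\<Sum>k\<in>uminus ` {1..N}. ?f k) = (\<Sum>k\<in>{1..N}. ?f k)"
    by (subst sum.reindex) (auto simp: inj_on_def)
  have "(\<Sum>k\<in>{-N..N} - {0}. ?f k) = (\<Sum>k\<in>{1..N}. ?f k) + (\<Sum>k\<in>uminus ` {1..N}. ?f k)"
    unfolding pos_neg by (rule sum.union_disjoint) auto
  also have "\<dots> = 2 * (\<Sum>k\<in>{1..N}. ?f k)"
    unfolding neg by simp
  also have "\<dots> \<le> 2 * zeta s"
    using sum_int_powr_neg_le_zeta[OF assms] by simp
  finally show ?thesis .
qed

lemma card_le_powr_mult_sum_powr_neg:
  fixes r :: "'a \<Rightarrow> real"
  assumes "\<And>x. x \<in> A \<Longrightarrow> 0 < r x \<and> r x \<le> M" and "q \<ge> 0"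
  shows "real (card A) \<le> M powr q * (\<Sum>x\<in>A. r x powr (-q))"
proof -
  have "1 \<le> M powr q * r x powr (-q)" if "x \<in> A" for x
  proof -
    have "1 \<le> (M / r x) powr q"
      using assms that by (intro ge_one_powr_ge_zero) auto
    also have "\<dots> = M powr q * r x powr (-q)"
      using assms that by (simp add: powr_divide powr_minus_divide)
    finally show ?thesis .
  qed
  then have "(\<Sum>x\<in>A. 1) \<le> (\<Sum>x\<in>A. M powr q * r x powr (-q))"
    by (rule sum_mono)
  then show ?thesis
    by (simp add: sum_distrib_left)
qed

lemma sum_prod_fixed_support_le_power:
  fixes g :: "int \<Rightarrow> real"
  assumes "finite u" "finite K" "\<And>k. g k \<ge> 0"
    and "\<And>h. h \<in> S \<Longrightarrow> supp h = u \<and> (\<forall>j\<in>u. h j \<in> K)"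
  shows "(\<Sum>h\<in>S. \<Prod>j\<in>u. g (h j)) \<le> (\<Sum>k\<in>K. g k) ^ card u"
proof -
  have "inj_on (\<lambda>h. restrict h u) S"
  proof (rule inj_onI, rule ext)
    fix h h' j
    assume "h \<in> S" "h' \<in> S" "restrict h u = restrict h' u"
    then have "supp h = u" "supp h' = u" "restrict h u j = restrict h' u j"
      using assms(4) by auto
    then show "h j = h' j"
      unfolding supp_def by (metis (mono_tags) mem_Collect_eq restrict_apply')
  qed
  then have "(\<Sum>h\<in>S. \<Prod>j\<in>u. g (h j)) = (\<Sum>f\<in>(\<lambda>h. restrict h u) ` S. \<Prod>j\<in>u. g (f j))"
    by (simp add: sum.reindex)
  also have "\<dots> \<le> (\<Sum>f\<in>PiE u (\<lambda>_. K). \<Prod>j\<in>u. g (f j))"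
    using assms by (intro sum_mono2 prod_nonneg) (auto simp: finite_PiE)
  also have "\<dots> = (\<Sum>k\<in>K. g k) ^ card u"
    using prod_sum_PiE[of u "\<lambda>_. K" "\<lambda>_. g"] assms by simp
  finally show ?thesis .
qed

lemma intvecs_supp_subset: "h \<in> intvecs d \<Longrightarrow> supp h \<subseteq> {1..d}"
  by (auto simp: intvecs_def supp_def)

lemma rfun_pos:
  assumes "\<gamma> (supp h) > 0"
  shows "rfun \<gamma> \<alpha> h > 0"
proof -
  have "(\<Prod>j\<in>supp h. \<bar>real_of_int (h j)\<bar> powr \<alpha>) > 0"
    by (rule prod_pos) (auto simp: supp_def)
  then show ?thesis
    using assms by (simp add: rfun_def)
qed

lemma rfun_powr_neg:
  "rfun \<gamma> \<alpha> h powr (-q)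
      = \<gamma> (supp h) powr q * (\<Prod>j\<in>supp h. \<bar>real_of_int (h j)\<bar> powr (-(\<alpha> * q)))"
proof -
  have "rfun \<gamma> \<alpha> h powr (-q)
      = inverse (\<gamma> (supp h)) powr (-q) * (\<Prod>j\<in>supp h. \<bar>real_of_int (h j)\<bar> powr \<alpha>) powr (-q)"
    by (simp add: rfun_def powr_mult)
  also have "inverse (\<gamma> (supp h)) powr (-q) = \<gamma> (supp h) powr q"
    by (simp add: inverse_powr powr_minus)
  also have "(\<Prod>j\<in>supp h. \<bar>real_of_int (h j)\<bar> powr \<alpha>) powr (-q)
      = (\<Prod>j\<in>supp h. \<bar>real_of_int (h j)\<bar> powr (-(\<alpha> * q)))"
    by (simp add: prod_powr_distrib powr_powr)
  finally show ?thesis .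
qed

lemma abs_powr_le_weight_mult_rfun:
  assumes "\<alpha> \<ge> 0" and "\<gamma> (supp h) > 0" and "finite (supp h)"
  shows "\<bar>real_of_int (h j)\<bar> powr \<alpha> \<le> \<gamma> (supp h) * rfun \<gamma> \<alpha> h"
proof -
  let ?f = "\<lambda>i. \<bar>real_of_int (h i)\<bar> powr \<alpha>"
  have "?f j \<le> (\<Prod>i\<in>supp h. ?f i)"
  proof (cases "j \<in> supp h")
    case True
    have "(\<Prod>i\<in>supp h - {j}. ?f i) \<ge> 1"
      using assms(1) by (intro prod_ge_1 ge_one_powr_ge_zero) (auto simp: supp_def)
    then have "?f j \<le> ?f j * (\<Prod>i\<in>supp h - {j}. ?f i)"
      by (simp add: mult_le_cancel_left1)
    also have "\<dots> = (\<Prod>i\<in>supp h. ?f i)"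
      using assms(3) True by (simp add: prod.remove)
    finally show ?thesis .
  next
    case False
    then show ?thesis
      by (simp add: supp_def prod_nonneg)
  qed
  then show ?thesis
    using assms(2) by (simp add: rfun_def field_simps)
qed

lemma rfun_axis_vector:
  "rfun \<gamma> \<alpha> (\<lambda>j. if j = i then int k else 0)
    = (if k = 0 then inverse (\<gamma> {}) else inverse (\<gamma> {i}) * real k powr \<alpha>)"
proof -
  have "supp (\<lambda>j. if j = i then int k else 0) = (if k = 0 then {} else {i})"
    by (auto simp: supp_def)
  then show ?thesis
    by (simp add: rfun_def)
qed

lemma index_set_coords_bounded:
  assumes "\<alpha> > 0" and "\<And>u. u \<subseteq> {1..d} \<Longrightarrow> \<gamma> u > 0"
  obtains N :: int where "\<And>h j. h \<in> index_set d \<gamma> \<alpha> M \<Longrightarrow> h j \<in> {-N..N}"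
proof -
  let ?G = "Max (\<gamma> ` Pow {1..d})"
  let ?N = "\<lceil>(?G * M) powr (1 / \<alpha>)\<rceil>"
  have "\<bar>h j\<bar> \<le> ?N" if "h \<in> index_set d \<gamma> \<alpha> M" for h j
  proof -
    have supp: "supp h \<subseteq> {1..d}" and rfun_le: "rfun \<gamma> \<alpha> h \<le> M"
      using that intvecs_supp_subset by (auto simp: index_set_def)
    then have "finite (supp h)"
      using finite_subset by blast
    have \<gamma>_pos: "\<gamma> (supp h) > 0"
      using supp assms(2) by blast
    then have "rfun \<gamma> \<alpha> h > 0"
      by (rule rfun_pos)
    have "\<gamma> (supp h) \<le> ?G"
      using supp by (intro Max_ge) auto
    then have "\<gamma> (supp h) * rfun \<gamma> \<alpha> h \<le> ?G * M"
      using \<gamma>_pos rfun_le \<open>rfun \<gamma> \<alpha> h > 0\<close> by (intro mult_mono) auto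
    then have "\<bar>real_of_int (h j)\<bar> powr \<alpha> \<le> ?G * M"
      using abs_powr_le_weight_mult_rfun[where \<gamma>=\<gamma> and h=h and \<alpha>=\<alpha> and j=j]
        assms(1) \<gamma>_pos \<open>finite (supp h)\<close> by simp
    then have "(\<bar>real_of_int (h j)\<bar> powr \<alpha>) powr (1 / \<alpha>) \<le> (?G * M) powr (1 / \<alpha>)"
      using assms(1) by (intro powr_mono2) auto
    then have "\<bar>real_of_int (h j)\<bar> \<le> (?G * M) powr (1 / \<alpha>)"
      using assms(1) by (simp add: powr_powr)
    then show ?thesis
      by linarith
  qed
  then show ?thesis
    by (intro that[of ?N]) (simp add: abs_le_iff minus_le_iff)
qed

lemma finite_index_set:
  assumes "\<alpha> > 0" and "\<And>u. u \<subseteq> {1..d} \<Longrightarrow> \<gamma> u > 0"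
  shows "finite (index_set d \<gamma> \<alpha> M)"
proof -
  obtain N where "\<And>h j. h \<in> index_set d \<gamma> \<alpha> M \<Longrightarrow> h j \<in> {-N..N}"
    using index_set_coords_bounded[where \<gamma> = \<gamma> and d = d and M = M, OF assms] by blast
  then have "index_set d \<gamma> \<alpha> M
      \<subseteq> {h. \<forall>j. (j \<in> {1..d} \<longrightarrow> h j \<in> {-N..N}) \<and> (j \<notin> {1..d} \<longrightarrow> h j = 0)}"
    by (auto simp: index_set_def intvecs_def)
  then show ?thesis
    by (rule finite_subset) (rule finite_set_of_finite_funs; simp)
qed

lemma sum_rfun_powr_neg_le_C1:
  assumes "\<alpha> > 0" and "\<alpha> * q > 1" and "\<And>u. u \<subseteq> {1..d} \<Longrightarrow> \<gamma> u > 0"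
  shows "(\<Sum>h\<in>index_set d \<gamma> \<alpha> M. rfun \<gamma> \<alpha> h powr (-q)) \<le> C1 d q \<alpha> \<gamma>"
proof -
  obtain N where N: "\<And>h j. h \<in> index_set d \<gamma> \<alpha> M \<Longrightarrow> h j \<in> {-N..N}"
    using index_set_coords_bounded[where \<gamma> = \<gamma> and d = d and M = M, OF assms(1,3)] by blast
  define A where "A = index_set d \<gamma> \<alpha> M"
  define g where "g k = \<bar>real_of_int k\<bar> powr (-(\<alpha> * q))" for k
  have "finite A"
    unfolding A_def using assms(1,3) by (rule finite_index_set)
  have "supp ` A \<subseteq> Pow {1..d}"
    using intvecs_supp_subset by (auto simp: A_def index_set_def)
  then have "(\<Sum>h\<in>A. rfun \<gamma> \<alpha> h powr (-q))
      = (\<Sum>u\<in>Pow {1..d}. \<Sum>h\<in>{h \<in> A. supp h = u}. rfun \<gamma> \<alpha> h powr (-q))"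
    using \<open>finite A\<close> by (intro sum.group[symmetric]) auto
  also have "\<dots> \<le> (\<Sum>u\<in>Pow {1..d}. \<gamma> u powr q * (2 * zeta (\<alpha> * q)) ^ card u)"
  proof (rule sum_mono)
    fix u
    assume u: "u \<in> Pow {1..d}"
    then have "finite u"
      using finite_subset by auto
    have "(\<Sum>h\<in>{h \<in> A. supp h = u}. rfun \<gamma> \<alpha> h powr (-q))
        = \<gamma> u powr q * (\<Sum>h\<in>{h \<in> A. supp h = u}. \<Prod>j\<in>u. g (h j))"
      by (simp add: rfun_powr_neg g_def sum_distrib_left)
    also have "\<dots> \<le> \<gamma> u powr q * (\<Sum>k\<in>{-N..N} - {0}. g k) ^ card u"
    proof (intro mult_left_mono sum_prod_fixed_support_le_power)
      fix h
      assume "h \<in> {h \<in> A. supp h = u}"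
      then show "supp h = u \<and> (\<forall>j\<in>u. h j \<in> {-N..N} - {0})"
        using N by (auto simp: A_def supp_def)
    qed (use \<open>finite u\<close> in \<open>auto simp: g_def\<close>)
    also have "\<dots> \<le> \<gamma> u powr q * (2 * zeta (\<alpha> * q)) ^ card u"
      using sum_nonzero_int_powr_neg_le_two_zeta[OF assms(2), of N]
      by (intro mult_left_mono power_mono) (auto simp: g_def intro: sum_nonneg)
    finally show "(\<Sum>h\<in>{h \<in> A. supp h = u}. rfun \<gamma> \<alpha> h powr (-q))
        \<le> \<gamma> u powr q * (2 * zeta (\<alpha> * q)) ^ card u" .
  qed
  finally show ?thesis
    by (simp add: A_def C1_def)
qed

lemma card_index_set_le:
  assumes "\<alpha> > 0" and "q > 1 / \<alpha>" and "\<And>u. u \<subseteq> {1..d} \<Longrightarrow> \<gamma> u > 0"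
  shows "real (card (index_set d \<gamma> \<alpha> M)) \<le> M powr q * C1 d q \<alpha> \<gamma>"
proof -
  have "q > 0" and "\<alpha> * q > 1"
    using assms(1,2) by (auto simp: field_simps intro: less_trans[of 0 "1 / \<alpha>"])
  have "rfun \<gamma> \<alpha> h > 0 \<and> rfun \<gamma> \<alpha> h \<le> M" if "h \<in> index_set d \<gamma> \<alpha> M" for h
    using that intvecs_supp_subset assms(3) by (auto simp: index_set_def intro!: rfun_pos)
  then have "real (card (index_set d \<gamma> \<alpha> M))
      \<le> M powr q * (\<Sum>h\<in>index_set d \<gamma> \<alpha> M. rfun \<gamma> \<alpha> h powr (-q))"
    using \<open>q > 0\<close> by (intro card_le_powr_mult_sum_powr_neg) auto
  also have "\<dots> \<le> M powr q * C1 d q \<alpha> \<gamma>"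
    using sum_rfun_powr_neg_le_C1[OF assms(1) \<open>\<alpha> * q > 1\<close> assms(3)] by (simp add: mult_left_mono)
  finally show ?thesis .
qed

lemma card_index_set_ge:
  assumes "d \<ge> 1" and "\<alpha> > 0" and "M \<ge> 1" and "\<gamma> {} = 1" and "\<gamma> {1} > 0"
    and "finite (index_set d \<gamma> \<alpha> M)"
  shows "(\<gamma> {1} * M) powr (1 / \<alpha>) \<le> real (card (index_set d \<gamma> \<alpha> M))"
proof -
  define x where "x = (\<gamma> {1} * M) powr (1 / \<alpha>)"
  define m where "m = nat \<lfloor>x\<rfloor>"
  define e where "e k = (\<lambda>j::nat. if j = 1 then int k else 0)" for k :: nat
  have "x \<ge> 0"
    by (simp add: x_def)
  have "e k \<in> index_set d \<gamma> \<alpha> M" if "k \<le> m" for k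
  proof -
    have "real k \<le> x"
      using that \<open>x \<ge> 0\<close> unfolding m_def by linarith
    then have "real k powr \<alpha> \<le> x powr \<alpha>"
      using assms(2) by (intro powr_mono2) auto
    also have "\<dots> = \<gamma> {1} * M"
      using assms(2,3,5) by (simp add: x_def powr_powr)
    finally have "rfun \<gamma> \<alpha> (e k) \<le> M"
      using assms(3-5) by (simp add: e_def rfun_axis_vector field_simps)
    moreover have "e k \<in> intvecs d"
      using assms(1) by (auto simp: intvecs_def e_def)
    ultimately show ?thesis
      by (simp add: index_set_def)
  qed
  moreover have "inj_on e {0..m}"
    by (rule inj_onI) (metis e_def of_nat_eq_iff)
  ultimately have "card {0..m} \<le> card (index_set d \<gamma> \<alpha> M)"
    using assms(6) by (intro card_inj_on_le[of e]) auto
  moreover have "x \<le> real m + 1"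
    using \<open>x \<ge> 0\<close> unfolding m_def by linarith
  ultimately show ?thesis
    unfolding x_def by simp
qed

theorem lemma5:
  fixes d :: nat and \<alpha> M :: real and \<gamma> :: "nat set \<Rightarrow> real"
  assumes "d \<ge> 1" and "\<alpha> > 1" and "M > 0"
    and "\<And>u. finite u \<Longrightarrow> u \<subseteq> {1..} \<Longrightarrow> \<gamma> u > 0"
    and "\<gamma> {} = 1"
  shows "finite (index_set d \<gamma> \<alpha> M)
      \<and> (\<forall>q. q > 1 / \<alpha> \<longrightarrow> real (card (index_set d \<gamma> \<alpha> M)) \<le> M powr q * C1 d q \<alpha> \<gamma>)
      \<and> (M \<ge> 1 \<longrightarrow> real (card (index_set d \<gamma> \<alpha> M)) \<ge> (\<gamma> {1} * M) powr (1 / \<alpha>))"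
proof -
  have "\<alpha> > 0"
    using assms(2) by simp
  have \<gamma>_pos: "\<gamma> u > 0" if "u \<subseteq> {1..d}" for u
    using that by (intro assms(4)) (auto intro: finite_subset)
  have "finite (index_set d \<gamma> \<alpha> M)"
    using \<open>\<alpha> > 0\<close> \<gamma>_pos by (rule finite_index_set)
  moreover have "real (card (index_set d \<gamma> \<alpha> M)) \<le> M powr q * C1 d q \<alpha> \<gamma>" if "q > 1 / \<alpha>" for q
    using \<open>\<alpha> > 0\<close> that \<gamma>_pos by (rule card_index_set_le)
  moreover have "(\<gamma> {1} * M) powr (1 / \<alpha>) \<le> real (card (index_set d \<gamma> \<alpha> M))" if "M \<ge> 1"
    using assms(1) \<open>\<alpha> > 0\<close> that assms(5) \<gamma>_pos[of "{1}"] \<open>finite (index_set d \<gamma> \<alpha> M)\<close>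
    by (intro card_index_set_ge) auto
  ultimately show ?thesis
    by blast
qed

end
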